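(* Let $\mu$ be a probabilistic frame for $\mathbb{R}^d$ with frame operator $S_\mu$, and let $h:\mathbb{R}^d\to\mathbb{R}^d$ be any measurable function with $\int_{\mathbb{R}^d}\|h(x)\|_2^2\,d\mu(x)<\infty$. Define $\psi_h:\mathbb{R}^d\to\mathbb{R}^d$ by $$\psi_h(x)=S_\mu^{-1}x+h(x)-\int_{\mathbb{R}^d}\langle S_\mu^{-1}x,y\rangle h(y)\,d\mu(y).$$ Then the pushforward $(\psi_h)_{\#}\mu$ is a transport dual to $\mu$, i.e. $(\psi_h)_{\#}\mu\in D_\mu$.
   Context: $P_2(\mathbb{R}^d)$ is the set of Borel probability measures $\mu$ on $\mathbb{R}^d$ with $\int\|x\|^2d\mu(x)<\infty$. A probability measure $\mu$ on $\mathbb{R}^d$ is a probabilistic frame if there exist $0<A\le B<\infty$ with $A\|x\|^2\le\int\langle x,y\rangle^2d\mu(y)\le B\|x\|^2$ for all $x\in\mathbb{R}^d$ (equivalently, $\mu\in P_2(\mathbb{R}^d)$ and the linear span of its support is $\mathbb{R}^d$). Its frame operator is the positive definite matrix $S_\mu=\int_{\mathbb{R}^d}xx^\top d\mu(x)$. For probability measures $\mu,\nu$, $\Gamma(\mu,\nu)$ denotes the set of couplings (probability measures on $\mathbb{R}^d\times\mathbb{R}^d$ with marginals $\mu$ and $\nu$). A measure $\nu\in P_2(\mathbb{R}^d)$ is a transport dual to the probabilistic frame $\mu$ if there exists $\gamma\in\Gamma(\mu,\nu)$ with $\iint xy^\top d\gamma(x,y)=I$; $D_\mu$ denotes the set of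 all transport duals to $\mu$. $T_\#\mu$ denotes the pushforward of $\mu$ by $T$. *)

theory Defs
  imports "HOL-Probability.Probability"
begin

definition P2 :: "(real^'n) measure \<Rightarrow> bool" where
  "P2 \<mu> \<longleftrightarrow> prob_space \<mu> \<and> sets \<mu> = sets borel \<and>
     (\<integral>\<^sup>+ x. ennreal ((norm x)\<^sup>2) \<partial>\<mu>) < \<infinity>"

definition prob_frame :: "(real^'n) measure \<Rightarrow> bool" where
  "prob_frame \<mu> \<longleftrightarrow> prob_space \<mu> \<and> sets \<mu> = sets borel \<and>
     (\<exists>A B. 0 < A \<and> A \<le> B \<and> B < \<infinity> \<and>
        (\<forall>x::real^'n. ennreal A * ennreal ((norm x)\<^sup>2) \<le> (\<integral>\<^sup>+ y. ennreal ((x \<bullet> y)\<^sup>2) \<partial>\<mu>)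
           \<and> (\<integral>\<^sup>+ y. ennreal ((x \<bullet> y)\<^sup>2) \<partial>\<mu>) \<le> ennreal B * ennreal ((norm x)\<^sup>2)))"

definition frame_operator :: "(real^'n) measure \<Rightarrow> real^'n^'n" where
  "frame_operator \<mu> = (\<chi> i j. \<integral> x. x $ i * x $ j \<partial>\<mu>)"

definition couplings :: "(real^'n) measure \<Rightarrow> (real^'n) measure \<Rightarrow> ((real^'n) \<times> (real^'n)) measure set" where
  "couplings \<mu> \<nu> = {\<gamma>. prob_space \<gamma> \<and> sets \<gamma> = sets borel \<and>
      distr \<gamma> borel fst = \<mu> \<and> distr \<gamma> borel snd = \<nu>}"

definition transport_duals :: "(real^'n) measure \<Rightarrow> (real^'n) measure set" where
  "transport_duals \<mu> = {\<nu>. P2 \<nu> \<and>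
      (\<exists>\<gamma>\<in>couplings \<mu> \<nu>. (\<chi> i j. \<integral> p. fst p $ i * snd p $ j \<partial>\<gamma>) = mat 1)}"

end

theory Submission
  imports Defs
begin

text \<open>Write \<open>S\<close> for the frame operator and \<open>C = \<integral> y h(y)\<^sup>T d\<mu>\<close>, so that the map is
  \<open>\<psi>(x) = S\<^sup>-\<^sup>1 x + h(x) - C\<^sup>T S\<^sup>-\<^sup>1 x\<close>; it is square integrable because \<open>x\<close> and \<open>h\<close> are.
  The lower frame bound makes the quadratic form of \<open>S\<close> definite, so \<open>S\<close> is invertible, and
  \<open>S\<^sup>-\<^sup>1\<close> is symmetric. Coupling \<open>\<mu>\<close> with \<open>\<psi>\<^sub>#\<mu>\<close> along the graph of \<open>\<psi>\<close>, the cross moment is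
  \<open>\<integral> x \<psi>(x)\<^sup>T d\<mu> = S S\<^sup>-\<^sup>1 + C - S S\<^sup>-\<^sup>1 C = I\<close>.\<close>

definition square_integrable :: "'a measure \<Rightarrow> ('a \<Rightarrow> 'b::real_normed_vector) \<Rightarrow> bool" where
  "square_integrable M f \<longleftrightarrow>
     f \<in> borel_measurable M \<and> (\<integral>\<^sup>+ x. ennreal ((norm (f x))\<^sup>2) \<partial>M) < \<infinity>"

definition cross_moment :: "'a measure \<Rightarrow> ('a \<Rightarrow> real^'n) \<Rightarrow> ('a \<Rightarrow> real^'m) \<Rightarrow> real^'m^'n" where
  "cross_moment M f g = (\<chi> i j. \<integral>x. f x $ i * g x $ j \<partial>M)"

lemma borel_measurable_vec_nth [measurable]: "(\<lambda>x::real^'n. x $ i) \<in> borel_measurable borel"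
  by (intro borel_measurable_continuous_onI linear_continuous_on bounded_linear_vec_nth)

lemma borel_measurable_matrix_vector_mult [measurable]:
  "(\<lambda>x::real^'n. A *v x) \<in> borel_measurable borel"
  by (intro borel_measurable_continuous_onI linear_continuous_on matrix_vector_mul_bounded_linear)

lemma square_integrable_bound:
  fixes f :: "'a \<Rightarrow> 'b::real_normed_vector" and g :: "'a \<Rightarrow> 'c::real_normed_vector"
  assumes "square_integrable M f" "g \<in> borel_measurable M" "0 \<le> K"
    and "\<And>x. x \<in> space M \<Longrightarrow> norm (g x) \<le> K * norm (f x)"
  shows "square_integrable M g"
proof -
  have [measurable]: "f \<in> borel_measurable M"
    using assms(1) by (simp add: square_integrable_def)
  have "(\<integral>\<^sup>+ x. ennreal ((norm (g x))\<^sup>2) \<partial>M) \<le> (\<integral>\<^sup>+ x. ennreal (K\<^sup>2) * ennreal ((norm (f x))\<^sup>2) \<partial>M)"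
    using assms(3,4) by (intro nn_integral_mono)
      (simp add: ennreal_mult'[symmetric] power_mono flip: power_mult_distrib)
  also have "\<dots> = ennreal (K\<^sup>2) * (\<integral>\<^sup>+ x. ennreal ((norm (f x))\<^sup>2) \<partial>M)"
    by (rule nn_integral_cmult) measurable
  also have "\<dots> < \<infinity>"
    using assms(1) by (simp add: square_integrable_def ennreal_mult_less_top)
  finally show ?thesis using assms(2) by (simp add: square_integrable_def)
qed

lemma nn_integral_sum_of_squares_finite:
  fixes f :: "'a \<Rightarrow> 'b::real_normed_vector" and g :: "'a \<Rightarrow> 'c::real_normed_vector"
  assumes "square_integrable M f" "square_integrable M g"
  shows "(\<integral>\<^sup>+ x. ennreal ((norm (f x))\<^sup>2 + (norm (g x))\<^sup>2) \<partial>M) < \<infinity>"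
proof -
  have [measurable]: "f \<in> borel_measurable M" "g \<in> borel_measurable M"
    using assms by (simp_all add: square_integrable_def)
  have "(\<integral>\<^sup>+ x. ennreal ((norm (f x))\<^sup>2 + (norm (g x))\<^sup>2) \<partial>M)
      = (\<integral>\<^sup>+ x. ennreal ((norm (f x))\<^sup>2) \<partial>M) + (\<integral>\<^sup>+ x. ennreal ((norm (g x))\<^sup>2) \<partial>M)"
    by (subst ennreal_plus) (auto intro: nn_integral_add)
  then show ?thesis using assms by (simp add: square_integrable_def)
qed

lemma square_integrable_add:
  fixes f g :: "'a \<Rightarrow> 'b::{real_normed_vector, second_countable_topology}"
  assumes "square_integrable M f" "square_integrable M g"
  shows "square_integrable M (\<lambda>x. f x + g x)"
proof -
  have [measurable]: "f \<in> borel_measurable M" "g \<in> borel_measurable M"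
    using assms by (simp_all add: square_integrable_def)
  have "(norm (f x + g x))\<^sup>2 \<le> 2 * ((norm (f x))\<^sup>2 + (norm (g x))\<^sup>2)" for x
  proof -
    have "(norm (f x + g x))\<^sup>2 \<le> (norm (f x) + norm (g x))\<^sup>2"
      by (intro power_mono norm_triangle_ineq) simp
    also have "\<dots> \<le> 2 * ((norm (f x))\<^sup>2 + (norm (g x))\<^sup>2)"
      using sum_squares_bound[of "norm (f x)" "norm (g x)"] by (simp add: power2_sum)
    finally show ?thesis .
  qed
  then have "(\<integral>\<^sup>+ x. ennreal ((norm (f x + g x))\<^sup>2) \<partial>M)
      \<le> (\<integral>\<^sup>+ x. ennreal (2 * ((norm (f x))\<^sup>2 + (norm (g x))\<^sup>2)) \<partial>M)"
    by (intro nn_integral_mono ennreal_leI)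
  also have "\<dots> = (\<integral>\<^sup>+ x. ennreal 2 * ennreal ((norm (f x))\<^sup>2 + (norm (g x))\<^sup>2) \<partial>M)"
    by (intro nn_integral_cong ennreal_mult) auto
  also have "\<dots> = ennreal 2 * (\<integral>\<^sup>+ x. ennreal ((norm (f x))\<^sup>2 + (norm (g x))\<^sup>2) \<partial>M)"
    by (rule nn_integral_cmult) measurable
  also have "\<dots> < \<infinity>"
    using nn_integral_sum_of_squares_finite[OF assms] by (simp add: ennreal_mult_less_top)
  finally have "(\<integral>\<^sup>+ x. ennreal ((norm (f x + g x))\<^sup>2) \<partial>M) < \<infinity>" .
  moreover have "(\<lambda>x. f x + g x) \<in> borel_measurable M"
    by measurable
  ultimately show ?thesis
    by (simp add: square_integrable_def)
qed

lemma square_integrable_matrix_vector_mult: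
  fixes f :: "'a \<Rightarrow> real^'n" and A :: "real^'n^'m"
  assumes "square_integrable M f"
  shows "square_integrable M (\<lambda>x. A *v f x)"
proof -
  obtain K where K: "K > 0" "\<And>x. norm (A *v x) \<le> norm x * K"
    using bounded_linear.pos_bounded[OF matrix_vector_mul_bounded_linear] by blast
  have "f \<in> borel_measurable M"
    using assms by (simp add: square_integrable_def)
  then have "(\<lambda>x. A *v f x) \<in> borel_measurable M"
    by (rule measurable_compose[OF _ borel_measurable_matrix_vector_mult])
  then show ?thesis
  proof (rule square_integrable_bound[OF assms _ less_imp_le[OF K(1)]])
    show "norm (A *v f x) \<le> K * norm (f x)" for x
      using K(2)[of "f x"] by (simp only: mult.commute)
  qed
qed

lemma mult_le_sum_squares: "0 \<le> a \<Longrightarrow> 0 \<le> b \<Longrightarrow> a * b \<le> a\<^sup>2 + (b::real)\<^sup>2"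
  using sum_squares_bound[of a b] mult_nonneg_nonneg[of a b] by linarith

lemma integrable_bounded_by_squares:
  fixes f :: "'a \<Rightarrow> 'b::real_normed_vector" and g :: "'a \<Rightarrow> 'c::real_normed_vector"
    and k :: "'a \<Rightarrow> 'd::{banach, second_countable_topology}"
  assumes "square_integrable M f" "square_integrable M g" "k \<in> borel_measurable M" "0 \<le> C"
    and "\<And>x. x \<in> space M \<Longrightarrow> norm (k x) \<le> C * ((norm (f x))\<^sup>2 + (norm (g x))\<^sup>2)"
  shows "integrable M k"
proof (rule integrableI_bounded)
  have [measurable]: "f \<in> borel_measurable M" "g \<in> borel_measurable M"
    using assms by (simp_all add: square_integrable_def)
  have "(\<integral>\<^sup>+ x. ennreal (norm (k x)) \<partial>M)
      \<le> (\<integral>\<^sup>+ x. ennreal (C * ((norm (f x))\<^sup>2 + (norm (g x))\<^sup>2)) \<partial>M)"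
    using assms(5) by (intro nn_integral_mono ennreal_leI)
  also have "\<dots> = (\<integral>\<^sup>+ x. ennreal C * ennreal ((norm (f x))\<^sup>2 + (norm (g x))\<^sup>2) \<partial>M)"
    using assms(4) by (intro nn_integral_cong ennreal_mult) auto
  also have "\<dots> = ennreal C * (\<integral>\<^sup>+ x. ennreal ((norm (f x))\<^sup>2 + (norm (g x))\<^sup>2) \<partial>M)"
    by (rule nn_integral_cmult) measurable
  also have "\<dots> < \<infinity>"
    using nn_integral_sum_of_squares_finite[OF assms(1,2)] by (simp add: ennreal_mult_less_top)
  finally show "(\<integral>\<^sup>+ x. ennreal (norm (k x)) \<partial>M) < \<infinity>" .
qed (fact assms(3))

lemma integrable_component_mult:
  fixes f :: "'a \<Rightarrow> real^'n" and g :: "'a \<Rightarrow> real^'m"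
  assumes "square_integrable M f" "square_integrable M g"
  shows "integrable M (\<lambda>x. f x $ i * g x $ j)"
proof (rule integrable_bounded_by_squares[OF assms _ zero_le_one])
  have [measurable]: "f \<in> borel_measurable M" "g \<in> borel_measurable M"
    using assms by (simp_all add: square_integrable_def)
  show "(\<lambda>x. f x $ i * g x $ j) \<in> borel_measurable M" by measurable
  fix x
  have "\<bar>f x $ i * g x $ j\<bar> \<le> norm (f x) * norm (g x)"
    unfolding abs_mult by (intro mult_mono component_le_norm_cart) auto
  then show "norm (f x $ i * g x $ j) \<le> 1 * ((norm (f x))\<^sup>2 + (norm (g x))\<^sup>2)"
    using mult_le_sum_squares[OF norm_ge_zero norm_ge_zero, of "f x" "g x"] by simp
qed

lemma integrable_inner_scaleR:
  fixes f :: "'a \<Rightarrow> real^'n" and g :: "'a \<Rightarrow> real^'m"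
  assumes "square_integrable M f" "square_integrable M g"
  shows "integrable M (\<lambda>x. (a \<bullet> f x) *\<^sub>R g x)"
proof (rule integrable_bounded_by_squares[OF assms _ norm_ge_zero])
  have [measurable]: "f \<in> borel_measurable M" "g \<in> borel_measurable M"
    using assms by (simp_all add: square_integrable_def)
  show "(\<lambda>x. (a \<bullet> f x) *\<^sub>R g x) \<in> borel_measurable M" by measurable
  fix x
  have "norm ((a \<bullet> f x) *\<^sub>R g x) \<le> norm a * (norm (f x) * norm (g x))"
    using mult_right_mono[OF Cauchy_Schwarz_ineq2[of a "f x"] norm_ge_zero[of "g x"]]
    by (simp add: mult.assoc)
  also have "\<dots> \<le> norm a * ((norm (f x))\<^sup>2 + (norm (g x))\<^sup>2)"
    by (intro mult_left_mono mult_le_sum_squares) auto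
  finally show "norm ((a \<bullet> f x) *\<^sub>R g x) \<le> norm a * ((norm (f x))\<^sup>2 + (norm (g x))\<^sup>2)" .
qed

lemma cross_moment_matrix_right:
  fixes f :: "'a \<Rightarrow> real^'n" and g :: "'a \<Rightarrow> real^'m"
  assumes "square_integrable M f" "square_integrable M g"
  shows "cross_moment M f (\<lambda>x. A *v g x) = cross_moment M f g ** transpose A"
proof -
  have "(\<integral>x. f x $ i * (A *v g x) $ j \<partial>M) = (\<Sum>k\<in>UNIV. A$j$k * (\<integral>x. f x $ i * g x $ k \<partial>M))"
    for i j
  proof -
    have "(\<integral>x. f x $ i * (A *v g x) $ j \<partial>M) = (\<integral>x. (\<Sum>k\<in>UNIV. A$j$k * (f x $ i * g x $ k)) \<partial>M)"
      by (simp add: matrix_vector_mult_def sum_distrib_left mult_ac)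
    also have "\<dots> = (\<Sum>k\<in>UNIV. A$j$k * (\<integral>x. f x $ i * g x $ k \<partial>M))"
      using integrable_component_mult[OF assms] by simp
    finally show ?thesis .
  qed
  then show ?thesis
    by (simp add: cross_moment_def matrix_matrix_mult_def transpose_def vec_eq_iff mult.commute)
qed

lemma cross_moment_add_right:
  fixes f :: "'a \<Rightarrow> real^'n" and g k :: "'a \<Rightarrow> real^'m"
  assumes "square_integrable M f" "square_integrable M g" "square_integrable M k"
  shows "cross_moment M f (\<lambda>x. g x + k x) = cross_moment M f g + cross_moment M f k"
  using integrable_component_mult[OF assms(1,2)] integrable_component_mult[OF assms(1,3)]
  by (simp add: cross_moment_def vec_eq_iff distrib_left)

lemma cross_moment_diff_right:
  fixes f :: "'a \<Rightarrow> real^'n" and g k :: "'a \<Rightarrow> real^'m"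
  assumes "square_integrable M f" "square_integrable M g" "square_integrable M k"
  shows "cross_moment M f (\<lambda>x. g x - k x) = cross_moment M f g - cross_moment M f k"
  using integrable_component_mult[OF assms(1,2)] integrable_component_mult[OF assms(1,3)]
  by (simp add: cross_moment_def vec_eq_iff right_diff_distrib)

lemma integral_inner_scaleR_eq_cross_moment:
  fixes f :: "'a \<Rightarrow> real^'n" and g :: "'a \<Rightarrow> real^'m"
  assumes "square_integrable M f" "square_integrable M g"
  shows "(\<integral>x. (a \<bullet> f x) *\<^sub>R g x \<partial>M) = transpose (cross_moment M f g) *v a"
proof -
  have "(\<integral>x. (a \<bullet> f x) *\<^sub>R g x \<partial>M) $ j = (\<Sum>k\<in>UNIV. a$k * (\<integral>x. f x $ k * g x $ j \<partial>M))" for j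
  proof -
    have "(\<integral>x. (a \<bullet> f x) *\<^sub>R g x \<partial>M) $ j = (\<integral>x. ((a \<bullet> f x) *\<^sub>R g x) $ j \<partial>M)"
      by (rule integral_bounded_linear[OF bounded_linear_vec_nth integrable_inner_scaleR[OF assms],
            symmetric])
    also have "\<dots> = (\<integral>x. (\<Sum>k\<in>UNIV. a$k * (f x $ k * g x $ j)) \<partial>M)"
      by (simp add: inner_vec_def sum_distrib_left sum_distrib_right mult_ac)
    also have "\<dots> = (\<Sum>k\<in>UNIV. a$k * (\<integral>x. f x $ k * g x $ j \<partial>M))"
      using integrable_component_mult[OF assms] by simp
    finally show ?thesis .
  qed
  then show ?thesis
    by (simp add: vec_eq_iff cross_moment_def matrix_vector_mult_def transpose_def mult.commute)
qed

lemma quadratic_form_cross_moment: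
  fixes f :: "'a \<Rightarrow> real^'n"
  assumes "square_integrable M f"
  shows "v \<bullet> (cross_moment M f f *v v) = (\<integral>x. (v \<bullet> f x)\<^sup>2 \<partial>M)"
proof -
  have "(\<integral>x. (v \<bullet> f x)\<^sup>2 \<partial>M) = (\<integral>x. (\<Sum>i\<in>UNIV. \<Sum>j\<in>UNIV. (v$i * v$j) * (f x $ i * f x $ j)) \<partial>M)"
    by (simp add: inner_vec_def power2_eq_square sum_product mult_ac)
  also have "\<dots> = (\<Sum>i\<in>UNIV. \<Sum>j\<in>UNIV. (v$i * v$j) * (\<integral>x. f x $ i * f x $ j \<partial>M))"
    using integrable_component_mult[OF assms assms] by simp
  also have "\<dots> = v \<bullet> (cross_moment M f f *v v)"
    by (simp add: inner_vec_def matrix_vector_mult_def cross_moment_def sum_distrib_left mult_ac)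
  finally show ?thesis by simp
qed

lemma cross_moment_perturbed_dual:
  fixes h :: "'a \<Rightarrow> real^'n" and M :: "real^'n^'n"
  assumes f: "square_integrable \<mu> f" and h: "square_integrable \<mu> h"
    and M: "cross_moment \<mu> f f ** M = mat 1" "transpose M = M"
  defines "D \<equiv> transpose (cross_moment \<mu> f h) ** M"
  shows "cross_moment \<mu> f (\<lambda>x. M *v f x + h x - D *v f x) = mat 1"
proof -
  let ?S = "cross_moment \<mu> f f" and ?C = "cross_moment \<mu> f h"
  have Mf: "square_integrable \<mu> (\<lambda>x. M *v f x)" and Df: "square_integrable \<mu> (\<lambda>x. D *v f x)"
    using f by (rule square_integrable_matrix_vector_mult)+
  have "cross_moment \<mu> f (\<lambda>x. M *v f x + h x - D *v f x)
      = cross_moment \<mu> f (\<lambda>x. M *v f x) + ?C - cross_moment \<mu> f (\<lambda>x. D *v f x)"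
    using Mf h Df by (simp add: cross_moment_diff_right cross_moment_add_right f square_integrable_add)
  also have "\<dots> = ?S ** M + ?C - ?S ** (M ** ?C)"
    using M(2) by (simp add: cross_moment_matrix_right f D_def matrix_transpose_mul)
  also have "\<dots> = mat 1"
    using M(1) by (simp add: matrix_mul_assoc)
  finally show ?thesis .
qed

lemma matrix_inv_right:
  fixes A :: "'a::semiring_1^'n^'m"
  assumes "invertible A"
  shows "A ** matrix_inv A = mat 1"
  using someI_ex[OF assms[unfolded invertible_def]] by (simp add: matrix_inv_def)

lemma transpose_matrix_inv_symmetric:
  fixes A :: "'a::comm_semiring_1^'n^'n"
  assumes "invertible A" "transpose A = A"
  shows "transpose (matrix_inv A) = matrix_inv A"
proof -
  have left: "transpose (matrix_inv A) ** A = mat 1"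
    by (metis assms matrix_inv_right matrix_transpose_mul transpose_mat)
  have "transpose (matrix_inv A) = transpose (matrix_inv A) ** (A ** matrix_inv A)"
    by (simp add: matrix_inv_right assms(1))
  also have "\<dots> = matrix_inv A"
    by (metis left matrix_mul_assoc matrix_mul_lid)
  finally show ?thesis .
qed

lemma frame_operator_eq_cross_moment: "frame_operator \<mu> = cross_moment \<mu> (\<lambda>x. x) (\<lambda>x. x)"
  by (simp add: frame_operator_def cross_moment_def)

lemma transpose_frame_operator: "transpose (frame_operator \<mu>) = frame_operator \<mu>"
  by (simp add: transpose_def frame_operator_def mult.commute)

lemma P2_imp_square_integrable: "P2 \<mu> \<Longrightarrow> square_integrable \<mu> (\<lambda>x. x)"
  by (simp add: P2_def square_integrable_def measurable_ident_sets)

lemma P2_distr: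
  fixes \<phi> :: "real^'n \<Rightarrow> real^'m"
  assumes "prob_space \<mu>" and "square_integrable \<mu> \<phi>"
  shows "P2 (distr \<mu> borel \<phi>)"
proof -
  have \<phi>: "\<phi> \<in> borel_measurable \<mu>"
    using assms(2) by (simp add: square_integrable_def)
  have "(\<integral>\<^sup>+ y. ennreal ((norm y)\<^sup>2) \<partial>distr \<mu> borel \<phi>) = (\<integral>\<^sup>+ x. ennreal ((norm (\<phi> x))\<^sup>2) \<partial>\<mu>)"
    by (rule nn_integral_distr[OF \<phi>]) measurable
  then show ?thesis
    using assms \<phi> by (simp add: P2_def square_integrable_def prob_space.prob_space_distr)
qed

lemma prob_frame_imp_P2:
  assumes "prob_frame \<mu>"
  shows "P2 \<mu>"
proof -
  obtain B where B: "\<And>x. (\<integral>\<^sup>+ y. ennreal ((x \<bullet> y)\<^sup>2) \<partial>\<mu>) \<le> ennreal B * ennreal ((norm x)\<^sup>2)"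
    using assms unfolding prob_frame_def by blast
  have [measurable_cong]: "sets \<mu> = sets borel"
    using assms by (simp add: prob_frame_def)
  have norm_sq: "ennreal ((norm x)\<^sup>2) = (\<Sum>i\<in>UNIV. ennreal ((axis i 1 \<bullet> x)\<^sup>2))" for x :: "real^'n"
    unfolding inner_axis' power2_norm_eq_inner by (simp add: inner_vec_def power2_eq_square sum_ennreal)
  have "(\<integral>\<^sup>+ x. ennreal ((norm x)\<^sup>2) \<partial>\<mu>) = (\<integral>\<^sup>+ x. (\<Sum>i\<in>UNIV. ennreal ((axis i 1 \<bullet> x)\<^sup>2)) \<partial>\<mu>)"
    by (simp only: norm_sq)
  also have "\<dots> = (\<Sum>i\<in>UNIV. \<integral>\<^sup>+ x. ennreal ((axis i 1 \<bullet> x)\<^sup>2) \<partial>\<mu>)"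
    by (rule nn_integral_sum) measurable
  also have "\<dots> < \<infinity>"
  proof -
    have "(\<integral>\<^sup>+ x. ennreal ((axis i 1 \<bullet> x)\<^sup>2) \<partial>\<mu>) < \<infinity>" for i
      using B[of "axis i 1"] by (simp add: order.strict_trans1)
    then show ?thesis by (simp add: sum_Pinfty less_top)
  qed
  finally show ?thesis
    using assms by (simp add: P2_def prob_frame_def)
qed

lemma invertible_frame_operator:
  assumes "prob_frame \<mu>"
  shows "invertible (frame_operator \<mu>)"
proof -
  obtain A where A: "0 < A" "\<And>x. ennreal A * ennreal ((norm x)\<^sup>2) \<le> (\<integral>\<^sup>+ y. ennreal ((x \<bullet> y)\<^sup>2) \<partial>\<mu>)"
    using assms unfolding prob_frame_def by blast
  have id: "square_integrable \<mu> (\<lambda>x. x)"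
    using assms by (intro P2_imp_square_integrable prob_frame_imp_P2)
  have "v = 0" if "frame_operator \<mu> *v v = 0" for v
  proof -
    have "integrable \<mu> (\<lambda>x. (v \<bullet> x)\<^sup>2)"
    proof (rule integrable_bounded_by_squares[OF id id _ zero_le_power2[of "norm v"]])
      have [measurable]: "(\<lambda>x. x) \<in> borel_measurable \<mu>"
        using id by (simp add: square_integrable_def)
      show "(\<lambda>x. (v \<bullet> x)\<^sup>2) \<in> borel_measurable \<mu>"
        by measurable
      fix x
      have "(v \<bullet> x)\<^sup>2 \<le> (norm v)\<^sup>2 * (norm x)\<^sup>2"
        using power_mono[OF Cauchy_Schwarz_ineq2[of v x] abs_ge_zero, of 2]
        by (simp add: power_mult_distrib)
      also have "\<dots> \<le> (norm v)\<^sup>2 * ((norm x)\<^sup>2 + (norm x)\<^sup>2)"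
        by (intro mult_left_mono) auto
      finally show "norm ((v \<bullet> x)\<^sup>2) \<le> (norm v)\<^sup>2 * ((norm x)\<^sup>2 + (norm x)\<^sup>2)"
        by simp
    qed
    then have "(\<integral>\<^sup>+ x. ennreal ((v \<bullet> x)\<^sup>2) \<partial>\<mu>) = ennreal (\<integral>x. (v \<bullet> x)\<^sup>2 \<partial>\<mu>)"
      by (rule nn_integral_eq_integral) simp
    also have "\<dots> = 0"
      using quadratic_form_cross_moment[OF id, of v] that
      by (simp add: frame_operator_eq_cross_moment)
    finally have "ennreal A * ennreal ((norm v)\<^sup>2) = 0"
      using A(2)[of v] by simp
    then show "v = 0"
      using A(1) by simp
  qed
  then show ?thesis
    by (simp add: invertible_left_inverse matrix_left_invertible_ker)
qed

lemma graph_distr_in_couplings: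
  fixes \<phi> :: "real^'n \<Rightarrow> real^'n"
  assumes "prob_space \<mu>" "sets \<mu> = sets borel" "\<phi> \<in> borel_measurable borel"
  shows "distr \<mu> borel (\<lambda>x. (x, \<phi> x)) \<in> couplings \<mu> (distr \<mu> borel \<phi>)"
proof -
  have graph: "(\<lambda>x. (x, \<phi> x)) \<in> measurable \<mu> borel"
    using assms(3) unfolding measurable_cong_sets[OF assms(2) refl] borel_prod[symmetric] by measurable
  have fst: "fst \<in> measurable (borel :: ((real^'n) \<times> (real^'n)) measure) borel"
    and snd: "snd \<in> measurable (borel :: ((real^'n) \<times> (real^'n)) measure) borel"
    by (simp_all add: borel_prod[symmetric])
  have "distr (distr \<mu> borel (\<lambda>x. (x, \<phi> x))) borel fst = \<mu>"
    using assms(2) by (simp add: distr_distr[OF fst graph] comp_def distr_id2)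
  moreover have "distr (distr \<mu> borel (\<lambda>x. (x, \<phi> x))) borel snd = distr \<mu> borel \<phi>"
    by (simp add: distr_distr[OF snd graph] comp_def)
  ultimately show ?thesis
    using prob_space.prob_space_distr[OF assms(1) graph] by (simp add: couplings_def)
qed

lemma cross_moment_graph_distr:
  fixes \<phi> :: "real^'n \<Rightarrow> real^'n"
  assumes "sets \<mu> = sets borel" "\<phi> \<in> borel_measurable borel"
  shows "cross_moment (distr \<mu> borel (\<lambda>x. (x, \<phi> x))) fst snd = cross_moment \<mu> (\<lambda>x. x) \<phi>"
proof -
  have graph: "(\<lambda>x. (x, \<phi> x)) \<in> measurable \<mu> borel"
    using assms(2) unfolding measurable_cong_sets[OF assms(1) refl] borel_prod[symmetric] by measurable
  have "(\<lambda>p. fst p $ i * snd p $ j) \<in> borel_measurable (borel :: ((real^'n) \<times> (real^'n)) measure)" for i j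
    by (simp add: borel_prod[symmetric])
  then show ?thesis
    by (simp add: cross_moment_def integral_distr[OF graph])
qed

lemma distr_in_transport_duals:
  fixes \<phi> :: "real^'n \<Rightarrow> real^'n"
  assumes "prob_space \<mu>" "sets \<mu> = sets borel" "square_integrable \<mu> \<phi>"
    and "cross_moment \<mu> (\<lambda>x. x) \<phi> = mat 1"
  shows "distr \<mu> borel \<phi> \<in> transport_duals \<mu>"
proof -
  have \<phi>: "\<phi> \<in> borel_measurable borel"
    using assms(3) by (simp add: square_integrable_def measurable_cong_sets[OF assms(2) refl])
  show ?thesis
    using graph_distr_in_couplings[OF assms(1,2) \<phi>] cross_moment_graph_distr[OF assms(2) \<phi>]
      P2_distr[OF assms(1,3)] assms(4)
    unfolding transport_duals_def cross_moment_def by force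
qed

theorem mainTheorem1:
  fixes \<mu> :: "(real^'n) measure" and h :: "real^'n \<Rightarrow> real^'n"
  assumes "prob_frame \<mu>"
    and "h \<in> borel_measurable borel"
    and "(\<integral>\<^sup>+ x. ennreal ((norm (h x))\<^sup>2) \<partial>\<mu>) < \<infinity>"
  shows "distr \<mu> borel
           (\<lambda>x. matrix_inv (frame_operator \<mu>) *v x + h x
                 - (\<integral> y. ((matrix_inv (frame_operator \<mu>) *v x) \<bullet> y) *\<^sub>R h y \<partial>\<mu>))
         \<in> transport_duals \<mu>"
proof -
  define M where "M = matrix_inv (frame_operator \<mu>)"
  define D where "D = transpose (cross_moment \<mu> (\<lambda>x. x) h) ** M"
  have \<mu>: "prob_space \<mu>" "sets \<mu> = sets borel"
    using assms(1) by (simp_all add: prob_frame_def)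
  have id: "square_integrable \<mu> (\<lambda>x. x)"
    using assms(1) by (intro P2_imp_square_integrable prob_frame_imp_P2)
  have h: "square_integrable \<mu> h"
    using assms(2,3) by (simp add: square_integrable_def measurable_cong_sets[OF \<mu>(2) refl])
  have M: "cross_moment \<mu> (\<lambda>x. x) (\<lambda>x. x) ** M = mat 1" "transpose M = M"
    using invertible_frame_operator[OF assms(1)] transpose_frame_operator[of \<mu>]
    by (simp_all add: M_def matrix_inv_right transpose_matrix_inv_symmetric
        flip: frame_operator_eq_cross_moment)
  have "(\<integral>y. ((M *v x) \<bullet> y) *\<^sub>R h y \<partial>\<mu>) = D *v x" for x
    using integral_inner_scaleR_eq_cross_moment[OF id h, of "M *v x"]
    by (simp add: D_def matrix_vector_mul_assoc del: transpose_matrix_vector)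
  moreover have "square_integrable \<mu> (\<lambda>x. M *v x + h x - D *v x)"
    using square_integrable_add[OF square_integrable_matrix_vector_mult[OF id, of "M - D"] h]
    by (simp add: matrix_vector_mult_diff_rdistrib algebra_simps)
  ultimately show ?thesis
    using distr_in_transport_duals[OF \<mu>] cross_moment_perturbed_dual[OF id h M]
    by (simp add: M_def[symmetric] D_def)
qed

end
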